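(* Let $X=\{v_1,\dots,v_n\}$ be a set of $n$ unit vectors in $\mathbb{R}^d$ such that $\langle v_i,v_j\rangle\in\{a,b\}$ for all $i\neq j$, where $-1\le a<b<1$. Let $G=(\langle v_i,v_j\rangle)_{i,j=1}^n$ be its Gram matrix, $J$ the $n\times n$ all-ones matrix, and \[ S=\frac{2G-(a+b)J+(a+b-2)I}{b-a}. \] Let $\lambda_1\ge\dots\ge\lambda_n$ be the eigenvalues of $S$ counted with multiplicity. (i) If $a+b\ge 0$, then $\lambda_i=\frac{a+b-2}{b-a}$ for all $d+1\le i\le n-1$ and $\lambda_n\le\frac{a+b-2}{b-a}$; i.e. $S$ has smallest eigenvalue $\lambda_n$ (counted once) and second smallest eigenvalue $\frac{a+b-2}{b-a}$ with multiplicity at least $n-d-1$. (ii) If $a+b<0$, then the smallest eigenvalue of $S$ is $\frac{a+b-2}{b-a}$, with multiplicity at least $n-d-1$.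
   Context: $S$ is a Seidel matrix: a real symmetric matrix with zero diagonal and off-diagonal entries $\pm1$ (the entry is $+1$ where the inner product is $b$ and $-1$ where it is $a$). *)

theory Defs
  imports "Jordan_Normal_Form.Char_Poly"
begin

text \<open>For a real
  symmetric matrix this multiset has exactly dim rows elements.\<close>
definition eigenvalue_mset :: "real mat \<Rightarrow> real multiset" where
  "eigenvalue_mset A = proots (char_poly A)"

text \<open>The eigenvalues listed in non-increasing order: lambda_1 \<ge> ... \<ge> lambda_n;
  lambda_i is  eigs_desc A ! (i - 1).\<close>
definition eigs_desc :: "real mat \<Rightarrow> real list" where
  "eigs_desc A = rev (sorted_list_of_multiset (eigenvalue_mset A))"

definition gram :: "nat \<Rightarrow> (nat \<Rightarrow> real vec) \<Rightarrow> real mat" where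
  "gram n v = mat n n (\<lambda>(i, j). v i \<bullet> v j)"

definition seidel_of :: "nat \<Rightarrow> (nat \<Rightarrow> real vec) \<Rightarrow> real \<Rightarrow> real \<Rightarrow> real mat" where
  "seidel_of n v a b =
     (1 / (b - a)) \<cdot>\<^sub>m (2 \<cdot>\<^sub>m gram n v - (a + b) \<cdot>\<^sub>m mat n n (\<lambda>_. 1)
        + (a + b - 2) \<cdot>\<^sub>m 1\<^sub>m n)"

end

theory Submission
  imports Defs "Jordan_Normal_Form.Jordan_Normal_Form_Uniqueness"
    "Jordan_Normal_Form.Jordan_Normal_Form_Existence"
begin

text \<open>Put \<open>c = (a + b - 2) / (b - a)\<close>. Then \<open>S - c I = (2 G - (a + b) J) / (b - a)\<close>, and
  \<open>G = V\<^sup>T V\<close> for the \<open>d \<times> n\<close> matrix \<open>V\<close> with columns \<open>v\<^sub>i\<close>. Hence the quadratic form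
  \<open>x\<^sup>T (S - c I) x\<close> equals \<open>(2 |V x|\<^sup>2 - (a + b) (\<Sum>i. x\<^sub>i)\<^sup>2) / (b - a)\<close>: it vanishes on the
  subspace \<open>V x = 0, \<Sum>i. x\<^sub>i = 0\<close> of codimension at most \<open>d + 1\<close>, it is \<open>\<le> 0\<close> on \<open>V x = 0\<close>
  when \<open>a + b \<ge> 0\<close>, it is \<open>\<ge> 0\<close> on \<open>\<Sum>i. x\<^sub>i = 0\<close>, and everywhere when \<open>a + b < 0\<close>.
  By the inertia bound (if the form of a real symmetric matrix is \<open>\<le> 0\<close> on a subspace of
  codimension \<open>k\<close>, at most \<open>k\<close> eigenvalues are positive), \<open>S\<close> has at most \<open>d + 1\<close>
  eigenvalues above \<open>c\<close>, at most \<open>d\<close> of them and at most one below \<open>c\<close> if \<open>a + b \<ge> 0\<close>,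
  and none below \<open>c\<close> if \<open>a + b < 0\<close>; the claims follow by counting.

  The inertia bound uses a diagonalization \<open>S = P D P\<^sup>-\<^sup>1\<close>, obtained from the Jordan normal form:
  the eigenvalues of a real symmetric matrix are real, and \<open>ker (S - e I)\<^sup>2 = ker (S - e I)\<close>
  forces all Jordan blocks to have size one.\<close>

section \<open>Real symmetric matrices are diagonalizable\<close>

lemma proots_prod_linear: "proots (\<Prod>a\<leftarrow>xs. [:-a, 1:]) = mset (xs :: 'a :: idom list)"
proof (induction xs)
  case (Cons x xs)
  have "proots (\<Prod>a\<leftarrow>x # xs. [:-a, 1:]) = proots [:-x, 1:] + proots (\<Prod>a\<leftarrow>xs. [:-a, 1:])"
    unfolding list.map prod_list.Cons by (rule proots_mult) (auto simp: prod_list_zero_iff)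
  then show ?case using Cons by simp
qed simp

lemma symmetric_matD:
  assumes "transpose_mat A = A" "i < dim_row A" "j < dim_row A"
  shows "A $$ (i, j) = A $$ (j, i)"
  by (metis assms index_transpose_mat(1) index_transpose_mat(2))

interpretation of_real_poly_hom: map_poly_inj_comm_ring_hom "of_real :: real \<Rightarrow> complex" ..

lemma complex_eigenvalue_of_real_symmetric:
  fixes A :: "real mat"
  assumes A: "A \<in> carrier_mat n n" and sym: "transpose_mat A = A"
    and ev: "eigenvector (map_mat complex_of_real A) v e"
  shows "e \<in> \<real>"
proof -
  from ev have v: "v \<in> carrier_vec n" and v0: "v \<noteq> 0\<^sub>v n"
    and eq: "map_mat complex_of_real A *\<^sub>v v = e \<cdot>\<^sub>v v"
    unfolding eigenvector_def using A by auto
  have row_eq: "(\<Sum>j<n. of_real (A $$ (i, j)) * v $ j) = e * v $ i" if "i < n" for i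
    using arg_cong[OF eq, of "\<lambda>w. w $ i"] that A v
    by (simp add: scalar_prod_def lessThan_atLeast0)
  define N where "N = (\<Sum>i<n. cnj (v $ i) * v $ i)"
  define T where "T = (\<Sum>i<n. cnj (v $ i) * (\<Sum>j<n. of_real (A $$ (i, j)) * v $ j))"
  have T_eq: "T = e * N"
    using row_eq by (simp add: T_def N_def sum_distrib_left mult_ac)
  have "cnj T = (\<Sum>i<n. \<Sum>j<n. of_real (A $$ (i, j)) * v $ i * cnj (v $ j))"
    by (simp add: T_def cnj_sum sum_distrib_left mult_ac)
  also have "\<dots> = (\<Sum>j<n. \<Sum>i<n. of_real (A $$ (i, j)) * v $ i * cnj (v $ j))"
    by (rule sum.swap)
  also have "\<dots> = T"
    using symmetric_matD[OF sym] A by (simp add: T_def sum_distrib_left mult_ac)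
  finally have T_real: "cnj T = T" .
  have N_eq: "N = of_real (\<Sum>i<n. (cmod (v $ i))\<^sup>2)"
    unfolding N_def of_real_sum by (intro sum.cong refl) (metis complex_norm_square mult.commute of_real_power)
  obtain i where i: "i < n" "v $ i \<noteq> 0"
    using v v0 by (metis eq_vecI carrier_vecD index_zero_vec)
  have "(\<Sum>i<n. (cmod (v $ i))\<^sup>2) > 0"
    by (rule sum_pos2[of _ i]) (use i in auto)
  then have "N \<noteq> 0" "cnj N = N" unfolding N_eq by (simp_all del: of_real_power of_real_sum)
  with T_real T_eq have "cnj e = e" by (metis complex_cnj_mult mult_right_cancel)
  then show ?thesis by (simp add: Reals_cnj_iff)
qed

lemma char_poly_real_symmetric_splits:
  fixes A :: "real mat"
  assumes A: "A \<in> carrier_mat n n" and sym: "transpose_mat A = A"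
  obtains es where "char_poly A = (\<Prod>e\<leftarrow>es. [:-e, 1:])"
proof -
  let ?B = "map_mat complex_of_real A"
  have B: "?B \<in> carrier_mat n n" using A by auto
  obtain cs where cs: "char_poly ?B = (\<Prod>c\<leftarrow>cs. [:-c, 1:])"
    using char_poly_factorized[OF B] by blast
  have real: "of_real (Re c) = c" if "c \<in> set cs" for c
  proof -
    have "poly (char_poly ?B) c = 0" unfolding cs using that by (rule linear_poly_root)
    then obtain v where "eigenvector ?B v c"
      unfolding eigenvalue_root_char_poly[OF B, symmetric] eigenvalue_def by blast
    then show ?thesis using complex_eigenvalue_of_real_symmetric[OF A sym] by (metis of_real_Re)
  qed
  have "map_poly complex_of_real (char_poly A) = char_poly ?B"
    by (rule of_real_hom.char_poly_hom[OF A, symmetric])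
  also have "\<dots> = (\<Prod>c\<leftarrow>cs. [:-c, 1:])" by (rule cs)
  also have "\<dots> = (\<Prod>e\<leftarrow>map Re cs. [:-complex_of_real e, 1:])"
    by (simp add: o_def real cong: map_cong)
  also have "\<dots> = map_poly complex_of_real (\<Prod>e\<leftarrow>map Re cs. [:-e, 1:])"
    by (simp add: of_real_poly_hom.hom_prod_list o_def)
  finally show ?thesis using that unfolding of_real_poly_hom.eq_iff by blast
qed

lemma symmetric_scalar_prod_swap:
  fixes A :: "'a :: comm_semiring_0 mat"
  assumes A: "A \<in> carrier_mat n n" and sym: "transpose_mat A = A"
    and x: "x \<in> carrier_vec n" and y: "y \<in> carrier_vec n"
  shows "(A *\<^sub>v x) \<bullet> y = x \<bullet> (A *\<^sub>v y)"
  using transpose_vec_mult_scalar[OF A y x] sym by simp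

lemma scalar_prod_self_pos:
  fixes x :: "real vec"
  assumes "x \<in> carrier_vec n" "x \<noteq> 0\<^sub>v n"
  shows "x \<bullet> x > 0"
  using conjugate_square_ge_0_vec[of x] conjugate_square_eq_0_vec[OF assms(1)] assms(2)
  by (simp add: order_le_neq_trans)

lemma real_symmetric_kernel_square:
  fixes B :: "real mat"
  assumes B: "B \<in> carrier_mat n n" and sym: "transpose_mat B = B"
  shows "mat_kernel (B ^\<^sub>m 2) = mat_kernel (B ^\<^sub>m 1)"
proof -
  have "B *\<^sub>v x = 0\<^sub>v n" if x: "x \<in> carrier_vec n" and "B *\<^sub>v (B *\<^sub>v x) = 0\<^sub>v n" for x
  proof -
    have "(B *\<^sub>v x) \<bullet> (B *\<^sub>v x) = x \<bullet> (B *\<^sub>v (B *\<^sub>v x))"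
      using B x by (intro symmetric_scalar_prod_swap[OF B sym]) auto
    also have "\<dots> = 0" using that by simp
    finally show ?thesis using scalar_prod_self_pos[of "B *\<^sub>v x" n] B x by fastforce
  qed
  moreover have "B *\<^sub>v (B *\<^sub>v x) = 0\<^sub>v n" if "B *\<^sub>v x = 0\<^sub>v n" for x
    using that B by (intro eq_vecI) (auto simp: scalar_prod_def)
  ultimately show ?thesis
    using B by (auto simp: mat_kernel_def numeral_2_eq_2)
qed

lemma sum_list_mono_eq:
  fixes f g :: "'a \<Rightarrow> nat"
  assumes "\<And>y. y \<in> set xs \<Longrightarrow> f y \<le> g y" and "(\<Sum>y\<leftarrow>xs. f y) = (\<Sum>y\<leftarrow>xs. g y)"
    and "x \<in> set xs"
  shows "f x = g x"
  using assms
proof (induction xs)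
  case (Cons y xs)
  have "(\<Sum>y\<leftarrow>xs. f y) \<le> (\<Sum>y\<leftarrow>xs. g y)" using Cons.prems(1) by (simp add: sum_list_mono)
  moreover have "f y \<le> g y" using Cons.prems(1) by simp
  ultimately have "f y = g y" "(\<Sum>y\<leftarrow>xs. f y) = (\<Sum>y\<leftarrow>xs. g y)"
    using Cons.prems(2) by simp_all
  with Cons show ?case by auto
qed simp

lemma jordan_nf_real_symmetric_blocks:
  fixes A :: "real mat"
  assumes A: "A \<in> carrier_mat n n" and sym: "transpose_mat A = A"
    and jnf: "jordan_nf A n_as" and p: "(k, e) \<in> set n_as"
  shows "k = 1"
proof -
  let ?B = "char_matrix A e"
  have B: "?B \<in> carrier_mat n n" using A by simp
  have "transpose_mat ?B = ?B"
    using A symmetric_matD[OF sym] by (intro eq_matI) (auto simp: char_matrix_def)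
  then have "dim_gen_eigenspace A e 2 = dim_gen_eigenspace A e 1"
    unfolding dim_gen_eigenspace_def kernel_dim_def
    using real_symmetric_kernel_square[OF B] B by simp
  then have dims: "(\<Sum>k\<leftarrow>map fst [(k, e')\<leftarrow>n_as. e' = e]. min 1 k)
    = (\<Sum>k\<leftarrow>map fst [(k, e')\<leftarrow>n_as. e' = e]. min 2 k)"
    unfolding dim_gen_eigenspace[OF jnf] by simp
  have "min 1 k = min 2 k"
    by (rule sum_list_mono_eq[OF _ dims]) (use p in force)+
  then have "k \<le> 1" using p by force
  moreover have "k \<noteq> 0" using jnf p unfolding jordan_nf_def by force
  ultimately show ?thesis by simp
qed

lemma jordan_matrix_diagonal:
  assumes "\<And>k e. (k, e) \<in> set n_as \<Longrightarrow> k = 1"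
  shows "diagonal_mat (jordan_matrix n_as)"
  using assms
proof (induction n_as)
  case (Cons p n_as)
  obtain e where p: "p = (1, e)" using Cons.prems by (cases p) auto
  have fst_1: "map fst n_as = map (\<lambda>_. 1) n_as"
    using Cons.prems by (intro map_cong) force+
  have len: "sum_list (map fst n_as) = length n_as" unfolding fst_1 sum_list_triv by simp
  have "jordan_matrix (p # n_as) = four_block_mat (jordan_block 1 e) (0\<^sub>m 1 (length n_as))
      (0\<^sub>m (length n_as) 1) (jordan_matrix n_as)"
    unfolding p jordan_matrix_def by (simp add: Let_def jordan_matrix_def[symmetric] len)
  moreover have "diagonal_mat (jordan_matrix n_as)" using Cons by force
  ultimately show ?case
    using len unfolding diagonal_mat_def
    by (auto simp: jordan_block_def index_mat_four_block)
qed (simp add: diagonal_mat_def jordan_matrix_def)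

lemma real_symmetric_diagonalizable:
  fixes A :: "real mat"
  assumes A: "A \<in> carrier_mat n n" and sym: "transpose_mat A = A"
  obtains P Q D where "similar_mat_wit A D P Q" "diagonal_mat D"
    "eigenvalue_mset A = mset (diag_mat D)"
proof -
  obtain es where "char_poly A = (\<Prod>e\<leftarrow>es. [:-e, 1:])"
    using char_poly_real_symmetric_splits[OF A sym] .
  then obtain n_as where jnf: "jordan_nf A n_as" using jordan_nf_exists[OF A] by blast
  let ?J = "jordan_matrix n_as"
  have diag: "diagonal_mat ?J"
    by (rule jordan_matrix_diagonal, rule jordan_nf_real_symmetric_blocks[OF A sym jnf])
  have sim: "similar_mat A ?J" using jnf unfolding jordan_nf_def by simp
  then obtain P Q where wit: "similar_mat_wit A ?J P Q" unfolding similar_mat_def by blast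
  have J: "?J \<in> carrier_mat n n" using similar_mat_witD2[OF A wit] by simp
  have "upper_triangular ?J" using diag J unfolding diagonal_mat_def upper_triangular_def by auto
  then have "char_poly A = (\<Prod>e\<leftarrow>diag_mat ?J. [:-e, 1:])"
    using char_poly_similar[OF sim] char_poly_upper_triangular[OF J] by simp
  then have "eigenvalue_mset A = mset (diag_mat ?J)"
    unfolding eigenvalue_mset_def by (simp add: proots_prod_linear)
  with wit diag that show ?thesis by blast
qed

lemma size_eigenvalue_mset_real_symmetric:
  fixes A :: "real mat"
  assumes A: "A \<in> carrier_mat n n" and sym: "transpose_mat A = A"
  shows "size (eigenvalue_mset A) = n"
proof -
  obtain P Q D where wit: "similar_mat_wit A D P Q" and "eigenvalue_mset A = mset (diag_mat D)"
    using real_symmetric_diagonalizable[OF A sym] .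
  then show ?thesis using similar_mat_witD2[OF A wit] by (simp add: diag_mat_def)
qed

section \<open>Counting eigenvalues by the sign of the quadratic form\<close>

lemma underdetermined_system_nontrivial_solution:
  fixes f :: "nat \<Rightarrow> 'b \<Rightarrow> 'a :: field"
  assumes "finite I" "k < card I"
  obtains c where "\<exists>i\<in>I. c i \<noteq> 0" "\<And>j. j < k \<Longrightarrow> (\<Sum>i\<in>I. f j i * c i) = 0"
  using assms
proof (induction k arbitrary: I f thesis)
  case 0
  then have "I \<noteq> {}" by auto
  then show ?case using "0.prems"(1)[of "\<lambda>_. 1"] by auto
next
  case (Suc k)
  show ?case
  proof (cases "\<forall>i\<in>I. f k i = 0")
    case True
    obtain c where c: "\<exists>i\<in>I. c i \<noteq> 0" "\<And>j. j < k \<Longrightarrow> (\<Sum>i\<in>I. f j i * c i) = 0"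
      using Suc.IH[of I f] Suc.prems(2,3) by auto
    show ?thesis by (rule Suc.prems(1)) (use c True in \<open>auto simp: less_Suc_eq\<close>)
  next
    case False
    then obtain i0 where i0: "i0 \<in> I" "f k i0 \<noteq> 0" by auto
    let ?I = "I - {i0}"
    \<comment> \<open>Gaussian elimination of the unknown \<open>i0\<close> using equation \<open>k\<close>.\<close>
    define g where "g j i = f j i - f j i0 * f k i / f k i0" for j i
    have "k < card ?I" using Suc.prems(2,3) i0 by (simp add: card_Diff_singleton)
    then obtain c' where c': "\<exists>i\<in>?I. c' i \<noteq> 0" "\<And>j. j < k \<Longrightarrow> (\<Sum>i\<in>?I. g j i * c' i) = 0"
      using Suc.IH[of ?I g] Suc.prems(2) by auto
    define s where "s = (\<Sum>i\<in>?I. f k i * c' i)"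
    define c where "c = c'(i0 := - s / f k i0)"
    have split: "(\<Sum>i\<in>I. f j i * c i) = (\<Sum>i\<in>?I. f j i * c' i) - f j i0 / f k i0 * s" for j
    proof -
      have "(\<Sum>i\<in>I. f j i * c i) = f j i0 * c i0 + (\<Sum>i\<in>?I. f j i * c i)"
        using Suc.prems(2) i0 by (simp add: sum.remove)
      also have "(\<Sum>i\<in>?I. f j i * c i) = (\<Sum>i\<in>?I. f j i * c' i)"
        by (rule sum.cong) (auto simp: c_def)
      finally show ?thesis by (simp add: c_def)
    qed
    have "(\<Sum>i\<in>I. f j i * c i) = 0" if "j < Suc k" for j
    proof (cases "j = k")
      case False
      with that have "(\<Sum>i\<in>?I. g j i * c' i) = 0" using c' by simp
      then show ?thesis
        unfolding split g_def s_def by (simp add: algebra_simps sum_subtractf sum_distrib_left)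
    qed (use i0 in \<open>simp add: split s_def\<close>)
    moreover have "\<exists>i\<in>I. c i \<noteq> 0" using c' by (auto simp: c_def)
    ultimately show ?thesis using Suc.prems(1) by blast
  qed
qed

lemma symmetric_eigenvectors_orthogonal:
  fixes A :: "'a :: idom mat"
  assumes A: "A \<in> carrier_mat n n" and sym: "transpose_mat A = A"
    and u: "u \<in> carrier_vec n" and w: "w \<in> carrier_vec n"
    and Au: "A *\<^sub>v u = e \<cdot>\<^sub>v u" and Aw: "A *\<^sub>v w = e' \<cdot>\<^sub>v w" and ne: "e \<noteq> e'"
  shows "u \<bullet> w = 0"
proof -
  have "e * (u \<bullet> w) = e' * (u \<bullet> w)"
    using symmetric_scalar_prod_swap[OF A sym u w] u w by (simp add: Au Aw)
  with ne show ?thesis by simp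
qed

lemma scalar_prod_mult_mat_vec_cols:
  fixes P :: "'a :: comm_semiring_0 mat"
  assumes P: "P \<in> carrier_mat m n" and u: "u \<in> carrier_vec m" and g: "g \<in> carrier_vec n"
  shows "u \<bullet> (P *\<^sub>v g) = (\<Sum>i<n. (u \<bullet> col P i) * g $ i)"
proof -
  have "u \<bullet> (P *\<^sub>v g) = (\<Sum>r<m. \<Sum>i<n. u $ r * P $$ (r, i) * g $ i)"
    using P u g by (simp add: scalar_prod_def sum_distrib_left mult.assoc lessThan_atLeast0)
  also have "\<dots> = (\<Sum>i<n. \<Sum>r<m. u $ r * P $$ (r, i) * g $ i)" by (rule sum.swap)
  finally show ?thesis
    using P u by (simp add: scalar_prod_def sum_distrib_right lessThan_atLeast0)
qed

lemma mult_mat_vec_scalar_prod_expand: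
  fixes P :: "'a :: comm_semiring_0 mat"
  assumes P: "P \<in> carrier_mat m n" and g: "g \<in> carrier_vec n" and h: "h \<in> carrier_vec n"
  shows "(P *\<^sub>v g) \<bullet> (P *\<^sub>v h) = (\<Sum>i<n. \<Sum>j<n. g $ i * h $ j * (col P i \<bullet> col P j))"
proof -
  have "(P *\<^sub>v g) \<bullet> (P *\<^sub>v h) = (\<Sum>j<n. ((P *\<^sub>v g) \<bullet> col P j) * h $ j)"
    using P g h by (intro scalar_prod_mult_mat_vec_cols) auto
  also have "\<dots> = (\<Sum>j<n. (\<Sum>i<n. (col P j \<bullet> col P i) * g $ i) * h $ j)"
    using P g by (intro sum.cong refl)
      (simp add: comm_scalar_prod[of "P *\<^sub>v g" m] scalar_prod_mult_mat_vec_cols)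
  also have "\<dots> = (\<Sum>j<n. \<Sum>i<n. g $ i * h $ j * (col P i \<bullet> col P j))"
    using P by (auto simp: sum_distrib_left sum_distrib_right comm_scalar_prod[of _ m] mult_ac
      intro!: sum.cong)
  also have "\<dots> = (\<Sum>i<n. \<Sum>j<n. g $ i * h $ j * (col P i \<bullet> col P j))"
    by (rule sum.swap)
  finally show ?thesis .
qed

lemma diagonal_mat_mult_vec:
  assumes D: "D \<in> carrier_mat n n" and diag: "diagonal_mat D" and g: "g \<in> carrier_vec n"
  shows "D *\<^sub>v g = vec n (\<lambda>i. D $$ (i, i) * g $ i)"
proof (rule eq_vecI)
  fix i assume "i < dim_vec (vec n (\<lambda>i. D $$ (i, i) * g $ i))"
  then have i: "i < n" by simp
  have "(D *\<^sub>v g) $ i = (\<Sum>j\<in>{0..<n}. D $$ (i, j) * g $ j)"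
    using D g i by (simp add: scalar_prod_def)
  also have "\<dots> = D $$ (i, i) * g $ i"
    using D diag i by (subst sum.remove[of _ i]) (auto simp: diagonal_mat_def intro!: sum.neutral)
  finally show "(D *\<^sub>v g) $ i = vec n (\<lambda>i. D $$ (i, i) * g $ i) $ i" using i by simp
qed (use D in simp)

lemma mult_mat_vec_unit_vec:
  fixes P :: "'a :: semiring_1 mat"
  assumes "P \<in> carrier_mat m n" "i < n"
  shows "P *\<^sub>v unit_vec n i = col P i"
  using assms by (intro eq_vecI) (auto simp: scalar_prod_def unit_vec_def if_distrib[of "(*) _"] cong: if_cong)

lemma diagonalization_mult_vec:
  fixes A D P Q :: "'a :: field mat"
  assumes A: "A \<in> carrier_mat n n" and wit: "similar_mat_wit A D P Q" and diag: "diagonal_mat D"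
    and g: "g \<in> carrier_vec n"
  shows "A *\<^sub>v (P *\<^sub>v g) = P *\<^sub>v vec n (\<lambda>i. D $$ (i, i) * g $ i)"
proof -
  from similar_mat_witD2[OF A wit] have P: "P \<in> carrier_mat n n" and Q: "Q \<in> carrier_mat n n"
    and D: "D \<in> carrier_mat n n" and QP: "Q * P = 1\<^sub>m n" and AD: "A = P * D * Q" by auto
  have AP: "A * P = P * D"
    using P Q D by (simp add: AD assoc_mult_mat[of _ n n _ n _ n] QP)
  have "A *\<^sub>v (P *\<^sub>v g) = (A * P) *\<^sub>v g" using A P g by simp
  also have "\<dots> = P *\<^sub>v (D *\<^sub>v g)" using P D g by (simp add: AP)
  finally show ?thesis using diagonal_mat_mult_vec[OF D diag g] by simp
qed

lemma diagonalization_col_eigenvector: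
  fixes A D P Q :: "'a :: field mat"
  assumes A: "A \<in> carrier_mat n n" and wit: "similar_mat_wit A D P Q" and diag: "diagonal_mat D"
    and i: "i < n"
  shows "A *\<^sub>v col P i = D $$ (i, i) \<cdot>\<^sub>v col P i"
proof -
  have P: "P \<in> carrier_mat n n" using similar_mat_witD2[OF A wit] by simp
  have "vec n (\<lambda>j. D $$ (j, j) * unit_vec n i $ j) = D $$ (i, i) \<cdot>\<^sub>v unit_vec n i"
    by (intro eq_vecI) (auto simp: unit_vec_def)
  then show ?thesis
    using diagonalization_mult_vec[OF A wit diag, of "unit_vec n i"] P i
    by (simp add: mult_mat_vec_unit_vec mult_mat_vec[of _ n n])
qed

lemma diagonalization_form_gt:
  fixes A D P Q :: "real mat"
  assumes A: "A \<in> carrier_mat n n" and sym: "transpose_mat A = A"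
    and wit: "similar_mat_wit A D P Q" and diag: "diagonal_mat D"
    and g: "g \<in> carrier_vec n" "g \<noteq> 0\<^sub>v n"
    and supp: "\<And>i. i < n \<Longrightarrow> g $ i \<noteq> 0 \<Longrightarrow> c < D $$ (i, i)"
  shows "c * ((P *\<^sub>v g) \<bullet> (P *\<^sub>v g)) < (P *\<^sub>v g) \<bullet> (A *\<^sub>v (P *\<^sub>v g))"
proof -
  from similar_mat_witD2[OF A wit] have P: "P \<in> carrier_mat n n" and Q: "Q \<in> carrier_mat n n"
    and QP: "Q * P = 1\<^sub>m n" by auto
  have orth: "col P i \<bullet> col P j = 0" if "i < n" "j < n" "D $$ (i, i) \<noteq> D $$ (j, j)" for i j
    using P that diagonalization_col_eigenvector[OF A wit diag]
    by (intro symmetric_eigenvectors_orthogonal[OF A sym]) auto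
  define h where "h = vec n (\<lambda>i. sqrt (D $$ (i, i) - c) * g $ i)"
  have h: "h \<in> carrier_vec n" by (simp add: h_def)
  \<comment> \<open>Only pairs with \<open>D $$ (i, i) = D $$ (j, j)\<close> contribute to the expanded form, and for
    those the weight \<open>D $$ (j, j) - c\<close> splits as \<open>sqrt (D $$ (i, i) - c) * sqrt (D $$ (j, j) - c)\<close>.\<close>
  have pair_term: "g $ i * g $ j * (D $$ (j, j) - c) * (col P i \<bullet> col P j)
      = h $ i * h $ j * (col P i \<bullet> col P j)" if "i < n" "j < n" for i j
  proof (cases "g $ i \<noteq> 0 \<and> g $ j \<noteq> 0 \<and> D $$ (i, i) = D $$ (j, j)")
    case True
    then have "sqrt (D $$ (i, i) - c) * sqrt (D $$ (j, j) - c) = D $$ (j, j) - c"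
      using supp[OF that(2)] by (simp flip: real_sqrt_mult)
    then show ?thesis using that by (simp add: h_def mult_ac)
  next
    case False
    then show ?thesis using that orth by (auto simp: h_def)
  qed
  have "(P *\<^sub>v g) \<bullet> (A *\<^sub>v (P *\<^sub>v g)) - c * ((P *\<^sub>v g) \<bullet> (P *\<^sub>v g))
      = (\<Sum>i<n. \<Sum>j<n. g $ i * g $ j * (D $$ (j, j) - c) * (col P i \<bullet> col P j))"
    using P g unfolding diagonalization_mult_vec[OF A wit diag g(1)]
    by (simp add: mult_mat_vec_scalar_prod_expand sum_distrib_left sum_subtractf algebra_simps)
  also have "\<dots> = (P *\<^sub>v h) \<bullet> (P *\<^sub>v h)"
    using P h by (simp add: mult_mat_vec_scalar_prod_expand pair_term)
  also have "\<dots> > 0"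
  proof (rule scalar_prod_self_pos)
    obtain i where i: "i < n" "g $ i \<noteq> 0" using g by (metis eq_vecI carrier_vecD index_zero_vec)
    then have "h $ i \<noteq> 0" using supp[OF i] by (simp add: h_def)
    moreover have "Q *\<^sub>v (P *\<^sub>v h) = h" using P Q h QP by (simp flip: assoc_mult_mat_vec)
    ultimately show "P *\<^sub>v h \<noteq> 0\<^sub>v n" using i Q by auto
  qed (use P h in simp)
  finally show ?thesis by simp
qed

lemma card_diag_gt_le_constraints:
  fixes A D P Q :: "real mat"
  assumes A: "A \<in> carrier_mat n n" and sym: "transpose_mat A = A"
    and wit: "similar_mat_wit A D P Q" and diag: "diagonal_mat D"
    and us: "set us \<subseteq> carrier_vec n"
    and form: "\<And>x. x \<in> carrier_vec n \<Longrightarrow> (\<forall>u\<in>set us. u \<bullet> x = 0) \<Longrightarrow>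
      x \<bullet> (A *\<^sub>v x) \<le> c * (x \<bullet> x)"
  shows "card {i. i < n \<and> c < D $$ (i, i)} \<le> length us"
proof (rule ccontr)
  define I where "I = {i. i < n \<and> c < D $$ (i, i)}"
  assume "\<not> ?thesis"
  then have "length us < card I" unfolding I_def by simp
  moreover have "finite I" unfolding I_def by simp
  ultimately obtain \<gamma> where \<gamma>: "\<exists>i\<in>I. \<gamma> i \<noteq> 0"
    and \<gamma>_sol: "\<And>j. j < length us \<Longrightarrow> (\<Sum>i\<in>I. (us ! j \<bullet> col P i) * \<gamma> i) = 0"
    using underdetermined_system_nontrivial_solution[of I "length us" "\<lambda>j i. us ! j \<bullet> col P i"]
    by blast
  have P: "P \<in> carrier_mat n n" using similar_mat_witD2[OF A wit] by simp
  define g where "g = vec n (\<lambda>i. if i \<in> I then \<gamma> i else 0)"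
  obtain i where "i \<in> I" "\<gamma> i \<noteq> 0" using \<gamma> by blast
  then have "g $ i \<noteq> 0" "i < n" by (simp_all add: g_def I_def)
  moreover have "g \<in> carrier_vec n" by (simp add: g_def)
  ultimately have g: "g \<in> carrier_vec n" "g \<noteq> 0\<^sub>v n" by auto
  have "u \<bullet> (P *\<^sub>v g) = 0" if "u \<in> set us" for u
  proof -
    obtain j where j: "j < length us" "u = us ! j" using \<open>u \<in> set us\<close> by (metis in_set_conv_nth)
    have "u \<bullet> (P *\<^sub>v g) = (\<Sum>i<n. (u \<bullet> col P i) * g $ i)"
      using P g us that by (intro scalar_prod_mult_mat_vec_cols) auto
    also have "\<dots> = (\<Sum>i\<in>I. (us ! j \<bullet> col P i) * \<gamma> i)"
      by (rule sum.mono_neutral_cong_right) (auto simp: I_def g_def j)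
    finally show ?thesis using \<gamma>_sol j by simp
  qed
  then have "(P *\<^sub>v g) \<bullet> (A *\<^sub>v (P *\<^sub>v g)) \<le> c * ((P *\<^sub>v g) \<bullet> (P *\<^sub>v g))"
    using P g by (intro form) auto
  moreover have "c * ((P *\<^sub>v g) \<bullet> (P *\<^sub>v g)) < (P *\<^sub>v g) \<bullet> (A *\<^sub>v (P *\<^sub>v g))"
    by (rule diagonalization_form_gt[OF A sym wit diag g]) (auto simp: g_def I_def split: if_splits)
  ultimately show False by simp
qed

lemma card_diag_lt_le_constraints:
  fixes A D P Q :: "real mat"
  assumes A: "A \<in> carrier_mat n n" and sym: "transpose_mat A = A"
    and wit: "similar_mat_wit A D P Q" and diag: "diagonal_mat D"
    and us: "set us \<subseteq> carrier_vec n"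
    and form: "\<And>x. x \<in> carrier_vec n \<Longrightarrow> (\<forall>u\<in>set us. u \<bullet> x = 0) \<Longrightarrow>
      c * (x \<bullet> x) \<le> x \<bullet> (A *\<^sub>v x)"
  shows "card {i. i < n \<and> D $$ (i, i) < c} \<le> length us"
proof -
  from similar_mat_witD2[OF A wit] have P: "P \<in> carrier_mat n n" and Q: "Q \<in> carrier_mat n n"
    and D: "D \<in> carrier_mat n n" and PQ: "P * Q = 1\<^sub>m n" "Q * P = 1\<^sub>m n" and AD: "A = P * D * Q"
    by auto
  have "similar_mat_wit (- A) (- D) P Q"
    using A P Q D PQ by (intro similar_mat_witI) (auto simp: AD)
  moreover have "transpose_mat (- A) = - A" by (simp add: transpose_uminus sym)
  moreover have "diagonal_mat (- D)" using diag by (simp add: diagonal_mat_def)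
  moreover have "x \<bullet> (- A *\<^sub>v x) \<le> - c * (x \<bullet> x)"
    if "x \<in> carrier_vec n" "\<forall>u\<in>set us. u \<bullet> x = 0" for x
    using form[OF that] that A by simp
  ultimately have "card {i. i < n \<and> - c < (- D) $$ (i, i)} \<le> length us"
    using A us by (intro card_diag_gt_le_constraints[of "- A" n]) auto
  moreover have "{i. i < n \<and> - c < (- D) $$ (i, i)} = {i. i < n \<and> D $$ (i, i) < c}"
    using D by auto
  ultimately show ?thesis by simp
qed

lemma size_filter_mset_diag_mat:
  assumes "D \<in> carrier_mat n n"
  shows "size (filter_mset p (mset (diag_mat D))) = card {i. i < n \<and> p (D $$ (i, i))}"
proof -
  have "size (filter_mset p (mset (diag_mat D))) = length (filter p (diag_mat D))"
    by (metis mset_filter size_mset)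
  also have "\<dots> = card {i. i < n \<and> p (D $$ (i, i))}"
    using assms by (auto simp: length_filter_conv_card diag_mat_def intro!: arg_cong[where f = card])
  finally show ?thesis .
qed

lemma size_eigenvalues_gt_le_constraints:
  fixes A :: "real mat"
  assumes A: "A \<in> carrier_mat n n" and sym: "transpose_mat A = A"
    and us: "set us \<subseteq> carrier_vec n"
    and form: "\<And>x. x \<in> carrier_vec n \<Longrightarrow> (\<forall>u\<in>set us. u \<bullet> x = 0) \<Longrightarrow>
      x \<bullet> (A *\<^sub>v x) \<le> c * (x \<bullet> x)"
  shows "size {#e \<in># eigenvalue_mset A. c < e#} \<le> length us"
proof -
  obtain P Q D where wit: "similar_mat_wit A D P Q" and diag: "diagonal_mat D"
    and ev: "eigenvalue_mset A = mset (diag_mat D)"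
    using real_symmetric_diagonalizable[OF A sym] .
  have "D \<in> carrier_mat n n" using similar_mat_witD2[OF A wit] by simp
  from size_filter_mset_diag_mat[OF this, of "\<lambda>e. c < e"] show ?thesis
    using card_diag_gt_le_constraints[OF A sym wit diag us form] unfolding ev by simp
qed

lemma size_eigenvalues_lt_le_constraints:
  fixes A :: "real mat"
  assumes A: "A \<in> carrier_mat n n" and sym: "transpose_mat A = A"
    and us: "set us \<subseteq> carrier_vec n"
    and form: "\<And>x. x \<in> carrier_vec n \<Longrightarrow> (\<forall>u\<in>set us. u \<bullet> x = 0) \<Longrightarrow>
      c * (x \<bullet> x) \<le> x \<bullet> (A *\<^sub>v x)"
  shows "size {#e \<in># eigenvalue_mset A. e < c#} \<le> length us"
proof -
  obtain P Q D where wit: "similar_mat_wit A D P Q" and diag: "diagonal_mat D"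
    and ev: "eigenvalue_mset A = mset (diag_mat D)"
    using real_symmetric_diagonalizable[OF A sym] .
  have "D \<in> carrier_mat n n" using similar_mat_witD2[OF A wit] by simp
  from size_filter_mset_diag_mat[OF this, of "\<lambda>e. e < c"] show ?thesis
    using card_diag_lt_le_constraints[OF A sym wit diag us form] unfolding ev by simp
qed

section \<open>The Seidel matrix\<close>

lemma quadratic_form_expand:
  fixes M :: "'a :: comm_semiring_0 mat"
  assumes "M \<in> carrier_mat n n" "x \<in> carrier_vec n"
  shows "x \<bullet> (M *\<^sub>v x) = (\<Sum>i<n. \<Sum>j<n. x $ i * x $ j * M $$ (i, j))"
  using assms by (simp add: scalar_prod_def sum_distrib_left mult_ac lessThan_atLeast0)

lemma seidel_of_carrier: "seidel_of n v a b \<in> carrier_mat n n"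
  by (simp add: seidel_of_def gram_def)

lemma seidel_of_index:
  assumes "i < n" "j < n"
  shows "seidel_of n v a b $$ (i, j)
    = (2 * (v i \<bullet> v j) - (a + b) + (a + b - 2) * (if i = j then 1 else 0)) / (b - a)"
  using assms by (simp add: seidel_of_def gram_def)

lemma seidel_of_symmetric:
  assumes dim: "\<forall>i<n. dim_vec (v i) = d"
  shows "transpose_mat (seidel_of n v a b) = seidel_of n v a b"
proof -
  have "v i \<bullet> v j = v j \<bullet> v i" if "i < n" "j < n" for i j
    using dim that by (intro comm_scalar_prod[of _ d] carrier_vecI) auto
  then show ?thesis
    using seidel_of_carrier[of n v a b] by (intro eq_matI) (auto simp: seidel_of_index)
qed

lemma seidel_of_quadratic_form:
  assumes dim: "\<forall>i<n. dim_vec (v i) = d" and x: "x \<in> carrier_vec n"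
  shows "x \<bullet> (seidel_of n v a b *\<^sub>v x) - (a + b - 2) / (b - a) * (x \<bullet> x)
    = (2 * (\<Sum>r<d. (vec n (\<lambda>i. v i $ r) \<bullet> x)\<^sup>2) - (a + b) * (vec n (\<lambda>_. 1) \<bullet> x)\<^sup>2) / (b - a)"
proof -
  have gram_sum: "(\<Sum>i<n. \<Sum>j<n. x $ i * x $ j * (v i \<bullet> v j)) = (\<Sum>r<d. (vec n (\<lambda>i. v i $ r) \<bullet> x)\<^sup>2)"
  proof -
    have "(\<Sum>i<n. \<Sum>j<n. x $ i * x $ j * (v i \<bullet> v j))
        = (\<Sum>i<n. \<Sum>j<n. \<Sum>r<d. (v i $ r * x $ i) * (v j $ r * x $ j))"
      using dim by (intro sum.cong refl) (simp add: scalar_prod_def sum_distrib_left mult_ac lessThan_atLeast0)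
    also have "\<dots> = (\<Sum>r<d. \<Sum>i<n. \<Sum>j<n. (v i $ r * x $ i) * (v j $ r * x $ j))"
      by (simp add: sum.swap[of _ "{..<d}"])
    also have "\<dots> = (\<Sum>r<d. (vec n (\<lambda>i. v i $ r) \<bullet> x)\<^sup>2)"
      using x by (simp add: scalar_prod_def power2_eq_square sum_product lessThan_atLeast0)
    finally show ?thesis .
  qed
  have ones_sum: "(\<Sum>i<n. \<Sum>j<n. x $ i * x $ j) = (vec n (\<lambda>_. 1) \<bullet> x)\<^sup>2"
    using x by (simp add: scalar_prod_def power2_eq_square sum_product lessThan_atLeast0)
  have diag_sum: "(\<Sum>i<n. \<Sum>j<n. x $ i * x $ j * (if i = j then 1 else 0)) = x \<bullet> x"
    using x by (simp add: scalar_prod_def lessThan_atLeast0 if_distrib[of "(*) _"] cong: if_cong)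
  have "x \<bullet> (seidel_of n v a b *\<^sub>v x)
      = (\<Sum>i<n. \<Sum>j<n. (2 * (x $ i * x $ j * (v i \<bullet> v j)) - (a + b) * (x $ i * x $ j)
         + (a + b - 2) * (x $ i * x $ j * (if i = j then 1 else 0))) / (b - a))"
    using x by (auto simp: quadratic_form_expand[OF seidel_of_carrier] seidel_of_index
      algebra_simps add_divide_distrib diff_divide_distrib intro!: sum.cong)
  also have "\<dots> = (2 * (\<Sum>i<n. \<Sum>j<n. x $ i * x $ j * (v i \<bullet> v j))
      - (a + b) * (\<Sum>i<n. \<Sum>j<n. x $ i * x $ j)
      + (a + b - 2) * (\<Sum>i<n. \<Sum>j<n. x $ i * x $ j * (if i = j then 1 else 0))) / (b - a)"
    by (simp only: sum_divide_distrib[symmetric] sum.distrib sum_subtractf sum_distrib_left[symmetric])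
  finally have "x \<bullet> (seidel_of n v a b *\<^sub>v x)
    = (2 * (\<Sum>r<d. (vec n (\<lambda>i. v i $ r) \<bullet> x)\<^sup>2) - (a + b) * (vec n (\<lambda>_. 1) \<bullet> x)\<^sup>2
       + (a + b - 2) * (x \<bullet> x)) / (b - a)"
    unfolding gram_sum ones_sum diag_sum .
  then show ?thesis by (cases "b = a") (simp_all add: field_simps)
qed

lemma size_seidel_eigenvalues_gt:
  assumes dim: "\<forall>i<n. dim_vec (v i) = d" and ab: "a < b"
  defines "c \<equiv> (a + b - 2) / (b - a)"
  shows "size {#e \<in># eigenvalue_mset (seidel_of n v a b). c < e#} \<le> d + 1"
    and "0 \<le> a + b \<Longrightarrow> size {#e \<in># eigenvalue_mset (seidel_of n v a b). c < e#} \<le> d"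
proof -
  let ?ws = "map (\<lambda>r. vec n (\<lambda>i. v i $ r)) [0..<d]" and ?one = "vec n (\<lambda>_. 1 :: real)"
  note eigenvalues_gt = size_eigenvalues_gt_le_constraints[OF seidel_of_carrier seidel_of_symmetric[OF dim]]
  note quad = seidel_of_quadratic_form[OF dim, where a = a and b = b, folded c_def]
  have "size {#e \<in># eigenvalue_mset (seidel_of n v a b). c < e#} \<le> length (?ws @ [?one])"
  proof (rule eigenvalues_gt)
    fix x :: "real vec" assume x: "x \<in> carrier_vec n" and "\<forall>u\<in>set (?ws @ [?one]). u \<bullet> x = 0"
    then have "x \<bullet> (seidel_of n v a b *\<^sub>v x) - c * (x \<bullet> x) = 0" by (simp add: quad[OF x])
    then show "x \<bullet> (seidel_of n v a b *\<^sub>v x) \<le> c * (x \<bullet> x)" by simp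
  qed auto
  then show "size {#e \<in># eigenvalue_mset (seidel_of n v a b). c < e#} \<le> d + 1" by simp
  assume "0 \<le> a + b"
  have "size {#e \<in># eigenvalue_mset (seidel_of n v a b). c < e#} \<le> length ?ws"
  proof (rule eigenvalues_gt)
    fix x :: "real vec" assume x: "x \<in> carrier_vec n" and "\<forall>u\<in>set ?ws. u \<bullet> x = 0"
    then have "x \<bullet> (seidel_of n v a b *\<^sub>v x) - c * (x \<bullet> x) = - ((a + b) * (?one \<bullet> x)\<^sup>2 / (b - a))"
      by (simp add: quad[OF x])
    also have "\<dots> \<le> 0" using \<open>0 \<le> a + b\<close> ab by simp
    finally show "x \<bullet> (seidel_of n v a b *\<^sub>v x) \<le> c * (x \<bullet> x)" by simp
  qed auto
  then show "size {#e \<in># eigenvalue_mset (seidel_of n v a b). c < e#} \<le> d" by simp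
qed

lemma size_seidel_eigenvalues_lt:
  assumes dim: "\<forall>i<n. dim_vec (v i) = d" and ab: "a < b"
  defines "c \<equiv> (a + b - 2) / (b - a)"
  shows "0 \<le> a + b \<Longrightarrow> size {#e \<in># eigenvalue_mset (seidel_of n v a b). e < c#} \<le> 1"
    and "a + b < 0 \<Longrightarrow> size {#e \<in># eigenvalue_mset (seidel_of n v a b). e < c#} = 0"
proof -
  let ?one = "vec n (\<lambda>_. 1 :: real)" and ?rows = "\<lambda>x. \<Sum>r<d. (vec n (\<lambda>i. v i $ r) \<bullet> x)\<^sup>2"
  note eigenvalues_lt = size_eigenvalues_lt_le_constraints[OF seidel_of_carrier seidel_of_symmetric[OF dim]]
  note quad = seidel_of_quadratic_form[OF dim, where a = a and b = b, folded c_def]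
  have rows_nonneg: "0 \<le> ?rows x" for x by (simp add: sum_nonneg)
  show "size {#e \<in># eigenvalue_mset (seidel_of n v a b). e < c#} \<le> 1" if "0 \<le> a + b"
  proof -
    have "size {#e \<in># eigenvalue_mset (seidel_of n v a b). e < c#} \<le> length [?one]"
    proof (rule eigenvalues_lt)
      fix x :: "real vec" assume x: "x \<in> carrier_vec n" and "\<forall>u\<in>set [?one]. u \<bullet> x = 0"
      then have "x \<bullet> (seidel_of n v a b *\<^sub>v x) - c * (x \<bullet> x) = 2 * ?rows x / (b - a)"
        by (simp add: quad[OF x])
      moreover have "0 \<le> 2 * ?rows x / (b - a)" using rows_nonneg[of x] ab by simp
      ultimately show "c * (x \<bullet> x) \<le> x \<bullet> (seidel_of n v a b *\<^sub>v x)" by simp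
    qed auto
    then show ?thesis by simp
  qed
  show "size {#e \<in># eigenvalue_mset (seidel_of n v a b). e < c#} = 0" if "a + b < 0"
  proof -
    have "size {#e \<in># eigenvalue_mset (seidel_of n v a b). e < c#} \<le> length ([] :: real vec list)"
    proof (rule eigenvalues_lt)
      fix x :: "real vec" assume x: "x \<in> carrier_vec n"
      have "(a + b) * (?one \<bullet> x)\<^sup>2 \<le> 0" using that by (simp add: mult_nonpos_nonneg)
      then have "0 \<le> 2 * ?rows x - (a + b) * (?one \<bullet> x)\<^sup>2" using rows_nonneg[of x] by simp
      then have "0 \<le> x \<bullet> (seidel_of n v a b *\<^sub>v x) - c * (x \<bullet> x)"
        unfolding quad[OF x] using ab by simp
      then show "c * (x \<bullet> x) \<le> x \<bullet> (seidel_of n v a b *\<^sub>v x)" by simp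
    qed auto
    then show ?thesis by simp
  qed
qed

section \<open>Eigenvalues in non-increasing order\<close>

lemma length_filter_rev_sorted_list_of_multiset:
  "length (filter p (rev (sorted_list_of_multiset M))) = size (filter_mset p M)"
  by (metis mset_filter mset_rev mset_sorted_list_of_multiset size_mset)

lemma rev_sorted_list_of_multiset_nth_le:
  fixes M :: "'a :: linorder multiset"
  assumes "size {#e \<in># M. c < e#} \<le> i" "i < size M"
  shows "rev (sorted_list_of_multiset M) ! i \<le> c"
proof (rule ccontr)
  let ?L = "rev (sorted_list_of_multiset M)"
  assume "\<not> ?L ! i \<le> c"
  have len: "length ?L = size M" by (metis length_rev mset_sorted_list_of_multiset size_mset)
  have "c < ?L ! t" if "t \<le> i" for t
    using sorted_rev_nth_mono[of ?L t i] that assms(2) len \<open>\<not> ?L ! i \<le> c\<close> by simp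
  then have "{..i} \<subseteq> {t. t < length ?L \<and> c < ?L ! t}" using assms(2) len by auto
  then have "Suc i \<le> length (filter (\<lambda>e. c < e) ?L)"
    unfolding length_filter_conv_card by (metis card_atMost card_mono finite_Collect_conjI finite_Collect_less_nat)
  then show False using assms(1) unfolding length_filter_rev_sorted_list_of_multiset by simp
qed

lemma rev_sorted_list_of_multiset_nth_ge:
  fixes M :: "'a :: linorder multiset"
  assumes "size {#e \<in># M. e < c#} < size M - i" "i < size M"
  shows "c \<le> rev (sorted_list_of_multiset M) ! i"
proof (rule ccontr)
  let ?L = "rev (sorted_list_of_multiset M)"
  assume "\<not> c \<le> ?L ! i"
  have len: "length ?L = size M" by (metis length_rev mset_sorted_list_of_multiset size_mset)
  have "?L ! t < c" if "i \<le> t" "t < size M" for t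
    using sorted_rev_nth_mono[of ?L i t] that len \<open>\<not> c \<le> ?L ! i\<close> by simp
  then have "{i..<size M} \<subseteq> {t. t < length ?L \<and> ?L ! t < c}" using len by auto
  then have "size M - i \<le> length (filter (\<lambda>e. e < c) ?L)"
    unfolding length_filter_conv_card by (metis card_atLeastLessThan card_mono finite_Collect_conjI finite_Collect_less_nat)
  then show False using assms(1) unfolding length_filter_rev_sorted_list_of_multiset by simp
qed

lemma rev_sorted_list_of_multiset_nth_eq:
  fixes M :: "'a :: linorder multiset"
  assumes "size {#e \<in># M. c < e#} \<le> i" "size {#e \<in># M. e < c#} < size M - i"
  shows "rev (sorted_list_of_multiset M) ! i = c"
  using assms rev_sorted_list_of_multiset_nth_le[OF assms(1)] rev_sorted_list_of_multiset_nth_ge[OF assms(2)]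
  by (intro antisym) auto

lemma size_mset_partition_at:
  fixes M :: "'a :: linorder multiset"
  shows "size M = size {#e \<in># M. e < c#} + count M c + size {#e \<in># M. c < e#}"
proof -
  have "M = {#e \<in># M. e < c#} + {#e \<in># M. e = c#} + {#e \<in># M. c < e#}"
    by (induction M) auto
  then show ?thesis by (metis count_conv_size_mset size_union)
qed

theorem mainTheorem6:
  fixes n d :: nat and v :: "nat \<Rightarrow> real vec" and a b :: real
  assumes dim: "\<And>i. i < n \<Longrightarrow> dim_vec (v i) = d"
    and unit: "\<And>i. i < n \<Longrightarrow> v i \<bullet> v i = 1"
    and ang: "\<And>i j. i < n \<Longrightarrow> j < n \<Longrightarrow> i \<noteq> j \<Longrightarrow> v i \<bullet> v j \<in> {a, b}"
    and ab: "-1 \<le> a" "a < b" "b < 1"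
    and nd: "d < n"
  shows
    "(a + b \<ge> 0 \<longrightarrow>
        (\<forall>i. d + 1 \<le> i \<and> i \<le> n - 1 \<longrightarrow>
             eigs_desc (seidel_of n v a b) ! (i - 1) = (a + b - 2) / (b - a))
      \<and> eigs_desc (seidel_of n v a b) ! (n - 1) \<le> (a + b - 2) / (b - a))
   \<and> (a + b < 0 \<longrightarrow>
        (\<forall>x \<in># eigenvalue_mset (seidel_of n v a b). (a + b - 2) / (b - a) \<le> x)
      \<and> n - d - 1 \<le> count (eigenvalue_mset (seidel_of n v a b)) ((a + b - 2) / (b - a))
      \<and> (d + 1 < n \<longrightarrow> eigs_desc (seidel_of n v a b) ! (n - 1) = (a + b - 2) / (b - a)))"
proof -
  let ?c = "(a + b - 2) / (b - a)" and ?M = "eigenvalue_mset (seidel_of n v a b)"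
  have dim': "\<forall>i<n. dim_vec (v i) = d" using dim by simp
  have size: "size ?M = n"
    by (rule size_eigenvalue_mset_real_symmetric[OF seidel_of_carrier seidel_of_symmetric[OF dim']])
  note gt = size_seidel_eigenvalues_gt[OF dim' ab(2)] and lt = size_seidel_eigenvalues_lt[OF dim' ab(2)]
  note nth_eq = rev_sorted_list_of_multiset_nth_eq[where M = ?M and c = ?c, folded eigs_desc_def]
  note nth_le = rev_sorted_list_of_multiset_nth_le[where M = ?M and c = ?c, folded eigs_desc_def]
  have "eigs_desc (seidel_of n v a b) ! i = ?c" if "0 \<le> a + b" "d \<le> i" "i < n - 1" for i
    by (rule nth_eq) (use gt(2)[OF that(1)] lt(1)[OF that(1)] size that in auto)
  moreover have "eigs_desc (seidel_of n v a b) ! (n - 1) \<le> ?c" if "0 \<le> a + b"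
    by (rule nth_le) (use gt(2)[OF that] size nd in auto)
  moreover have "\<forall>x \<in># ?M. ?c \<le> x" if "a + b < 0"
    using lt(2)[OF that] by (auto simp: filter_mset_eq_conv not_less)
  moreover have "n - d - 1 \<le> count ?M ?c" if "a + b < 0"
    using size_mset_partition_at[of ?M ?c] lt(2)[OF that] gt(1) size by linarith
  moreover have "eigs_desc (seidel_of n v a b) ! (n - 1) = ?c" if "a + b < 0" "d + 1 < n"
    by (rule nth_eq) (use lt(2)[OF that(1)] gt(1) size that in auto)
  ultimately show ?thesis by (auto simp: Suc_le_eq)
qed

end
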